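(* Let $n$ be such that $\theta^n=\mathrm{id}$, let $a\in\mathbb F^*$ with $\theta(a)=a$ (so $x^n-a$ is central in $\mathcal R$ and $\mathcal S_a$ is a ring), and suppose $x^n-a=hg$ with $g,h\in\mathcal R$. Then: (1) $M^\theta_a$ induces an injective ring homomorphism $\mathcal S_a\to\mathbb F^{n\times n}$; (2) $x^n-a=gh$; (3) $M^\theta_a(\overline g)M^\theta_a(\overline h)=M^\theta_a(\overline h)M^\theta_a(\overline g)=0$; (4) the maps $\psi_h:\mathcal S_a\to\mathcal S_a$, $\overline f\mapsto\overline{fh}$ and $\psi_g:\mathcal S_a\to\mathcal S_a$, $\overline f\mapsto\overline{fg}$ are left $\mathcal R$-module homomorphisms with $\ker\psi_h=\mathcal R\overline g=\mathrm{ann}_l(\overline h\,\mathcal S_a)$ and $\ker\psi_g=\mathcal R\overline h=\mathrm{ann}_l(\overline g\,\mathcal S_a)$; (5) the maps $\psi'_h:\overline f\mapsto\overline{hf}$ and $\psi'_g:\overline f\mapsto\overline{gf}$ on $\mathcal S_a$ are right $\mathcal R$-module homomorphisms with $\ker\psi'_h=\overline g\,\mathcal S_a=\mathrm{ann}_r(\mathcal S_a\overline h)$ and $\ker\psi'_g=\overline h\,\mathcal S_a=\mathrm{ann}_r(\mathcal S_a\overline g)$; (6) if $\mathcal C=\mathfrak v_a(\mathcal R\overline g)$ and $h=\sum_{i=0}^kh_ix^i$ with $h_k\ne0$, then $\mathcal C^\perp=\mathfrak v_{a^{-1}}(\mathcal R\overline{\rho_l(h)})$, where $\rho_l(h)=h_k+\theta(h_{k-1})x+\dots+\theta^k(h_0)x^k$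 and the coset is taken in $\mathcal R/\mathcal R(x^n-a^{-1})$.
   Context: $\mathbb F$ is a finite field, $\theta\in\mathrm{Aut}(\mathbb F)$, $\mathcal R=\mathbb F[x;\theta]$ the skew polynomial ring (elements $\sum f_ix^i$ with left coefficients, multiplication determined by $xb=\theta(b)x$). For $e\in\mathbb F^*$, $\mathcal S_e=\mathcal R/\mathcal R(x^n-e)$, $\overline f$ the coset of $f$, $\mathcal R\overline f$ the left submodule generated by $\overline f$, $\overline f\,\mathcal S_a$ the right ideal of the ring $\mathcal S_a$ generated by $\overline f$; $\mathrm{ann}_l(X)=\{s\in\mathcal S_a: sX=0\}$ and $\mathrm{ann}_r(X)=\{s\in\mathcal S_a: Xs=0\}$. $\mathfrak v_e:\mathcal S_e\to\mathbb F^n$ is the inverse of $(c_0,\dots,c_{n-1})\mapsto\overline{\sum_{i=0}^{n-1}c_ix^i}$, and $M^\theta_a(\overline f)$ is the $n\times n$ matrix whose row with index $i$ ($0\le i\le n-1$) is $\mathfrak v_a(\overline{x^if})$. $\mathcal C^\perp$ is the dual code with respect to the standard bilinear form on $\mathbb F^n$. *)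

theory Defs
  imports "HOL-Computational_Algebra.Polynomial" "Jordan_Normal_Form.Matrix"
begin

definition field_aut :: "('a::field \<Rightarrow> 'a) \<Rightarrow> bool" where
  "field_aut \<theta> \<longleftrightarrow> bij \<theta> \<and> (\<forall>x y. \<theta> (x + y) = \<theta> x + \<theta> y)
      \<and> (\<forall>x y. \<theta> (x * y) = \<theta> x * \<theta> y) \<and> \<theta> 1 = 1"

text \<open>Skew polynomials F[x;theta] are represented by ordinary polynomials (coefficient
  sequences, coefficients written on the left); addition is the usual one and the
  multiplication is determined by x b = theta(b) x:
  (sum f_i x^i)(sum g_j x^j) = sum f_i theta^i(g_j) x^(i+j).\<close>
definition skew_mult :: "('a::field \<Rightarrow> 'a) \<Rightarrow> 'a poly \<Rightarrow> 'a poly \<Rightarrow> 'a poly" where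
  "skew_mult \<theta> f g = (\<Sum>i\<le>degree f. monom (coeff f i) i * map_poly (\<theta> ^^ i) g)"

definition xn_minus :: "nat \<Rightarrow> 'a::field \<Rightarrow> 'a poly" where
  "xn_minus n e = monom 1 n - [:e:]"

definition skew_cong :: "('a::field \<Rightarrow> 'a) \<Rightarrow> nat \<Rightarrow> 'a \<Rightarrow> 'a poly \<Rightarrow> 'a poly \<Rightarrow> bool" where
  "skew_cong \<theta> n e f g \<longleftrightarrow> (\<exists>q. f - g = skew_mult \<theta> q (xn_minus n e))"

definition scls :: "('a::field \<Rightarrow> 'a) \<Rightarrow> nat \<Rightarrow> 'a \<Rightarrow> 'a poly \<Rightarrow> 'a poly set" where
  "scls \<theta> n e f = {g. skew_cong \<theta> n e f g}"

definition SS :: "('a::field \<Rightarrow> 'a) \<Rightarrow> nat \<Rightarrow> 'a \<Rightarrow> 'a poly set set" where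
  "SS \<theta> n e = range (scls \<theta> n e)"

definition srep :: "'a poly set \<Rightarrow> 'a poly" where
  "srep X = (SOME f. f \<in> X)"

text \<open>Operations on S_e via representatives: addition, ring multiplication (meaningful when
  x^n - e is central), left action of R, right action of R.\<close>
definition sadd :: "('a::field \<Rightarrow> 'a) \<Rightarrow> nat \<Rightarrow> 'a \<Rightarrow> 'a poly set \<Rightarrow> 'a poly set \<Rightarrow> 'a poly set" where
  "sadd \<theta> n e X Y = scls \<theta> n e (srep X + srep Y)"

definition smul :: "('a::field \<Rightarrow> 'a) \<Rightarrow> nat \<Rightarrow> 'a \<Rightarrow> 'a poly set \<Rightarrow> 'a poly set \<Rightarrow> 'a poly set" where
  "smul \<theta> n e X Y = scls \<theta> n e (skew_mult \<theta> (srep X) (srep Y))"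

definition sact :: "('a::field \<Rightarrow> 'a) \<Rightarrow> nat \<Rightarrow> 'a \<Rightarrow> 'a poly \<Rightarrow> 'a poly set \<Rightarrow> 'a poly set" where
  "sact \<theta> n e r X = scls \<theta> n e (skew_mult \<theta> r (srep X))"

definition sact_r :: "('a::field \<Rightarrow> 'a) \<Rightarrow> nat \<Rightarrow> 'a \<Rightarrow> 'a poly set \<Rightarrow> 'a poly \<Rightarrow> 'a poly set" where
  "sact_r \<theta> n e X r = scls \<theta> n e (skew_mult \<theta> (srep X) r)"

definition ann_l :: "('a::field \<Rightarrow> 'a) \<Rightarrow> nat \<Rightarrow> 'a \<Rightarrow> 'a poly set set \<Rightarrow> 'a poly set set" where
  "ann_l \<theta> n e X = {s \<in> SS \<theta> n e. \<forall>x\<in>X. smul \<theta> n e s x = scls \<theta> n e 0}"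

definition ann_r :: "('a::field \<Rightarrow> 'a) \<Rightarrow> nat \<Rightarrow> 'a \<Rightarrow> 'a poly set set \<Rightarrow> 'a poly set set" where
  "ann_r \<theta> n e X = {s \<in> SS \<theta> n e. \<forall>x\<in>X. smul \<theta> n e x s = scls \<theta> n e 0}"

definition sv :: "('a::field \<Rightarrow> 'a) \<Rightarrow> nat \<Rightarrow> 'a \<Rightarrow> 'a poly set \<Rightarrow> 'a vec" where
  "sv \<theta> n e X = (THE c. c \<in> carrier_vec n \<and> scls \<theta> n e (\<Sum>i<n. monom (c $ i) i) = X)"

definition Mmat :: "('a::field \<Rightarrow> 'a) \<Rightarrow> nat \<Rightarrow> 'a \<Rightarrow> 'a poly set \<Rightarrow> 'a mat" where
  "Mmat \<theta> n e X = mat n n (\<lambda>(i, j). sv \<theta> n e (sact \<theta> n e (monom 1 i) X) $ j)"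

definition rho_l :: "('a::field \<Rightarrow> 'a) \<Rightarrow> 'a poly \<Rightarrow> 'a poly" where
  "rho_l \<theta> h = (\<Sum>i\<le>degree h. monom ((\<theta> ^^ i) (coeff h (degree h - i))) i)"

definition dual_code :: "nat \<Rightarrow> 'a::field vec set \<Rightarrow> 'a vec set" where
  "dual_code n C = {y \<in> carrier_vec n. \<forall>c\<in>C. c \<bullet> y = 0}"

end

theory Submission
  imports Defs
begin

text \<open>Because \<open>\<theta>\<^sup>n = id\<close> and \<open>\<theta>(a) = a\<close>, the skew products of \<open>x\<^sup>n - a\<close> with any
  \<open>f\<close>, on either side, are the ordinary product \<open>(x\<^sup>n - a) f\<close>.  So congruence modulo
  \<open>R(x\<^sup>n - a)\<close> is ordinary divisibility by \<open>x\<^sup>n - a\<close>, every class has a unique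
  remainder of degree \<open>< n\<close>, and \<open>M(f)\<close> is the matrix of right multiplication by \<open>f\<close>
  in the basis \<open>1, x, \<dots>, x\<^sup>n\<^sup>-\<^sup>1\<close>; this gives the ring embedding.  Centrality and
  cancellation in the domain \<open>R\<close> turn \<open>h (g h) = (x\<^sup>n - a) h = h (x\<^sup>n - a)\<close> into
  \<open>x\<^sup>n - a = g h\<close>, and describe the kernels of the multiplication maps.

  For the dual code, reversing \<open>x\<^sup>n - a = h g\<close> shows that \<open>\<rho>(h)\<close> right-divides
  \<open>x\<^sup>n - a\<^sup>-\<^sup>1\<close>.  The inner product of \<open>x\<^sup>i g\<close> and \<open>x\<^sup>j \<rho>(h)\<close> is a twisted
  coefficient of \<open>g h = x\<^sup>n - a\<close> strictly between the degrees \<open>0\<close> and \<open>n\<close>, hence zero,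
  so the \<open>\<rho>(h)\<close>-code lies in \<open>C\<^sup>\<bottom>\<close>.  Over a finite field both have \<open>|F|\<^sup>n\<^sup>-\<^sup>k\<close>
  elements: \<open>C\<close> contains the \<open>k\<close> shifts \<open>x\<^sup>i g\<close>, \<open>i < k\<close>, which are in echelon form.\<close>

lemma field_aut_add: "field_aut \<theta> \<Longrightarrow> \<theta> (x + y) = \<theta> x + \<theta> y"
  and field_aut_mult: "field_aut \<theta> \<Longrightarrow> \<theta> (x * y) = \<theta> x * \<theta> y"
  and field_aut_one: "field_aut \<theta> \<Longrightarrow> \<theta> 1 = 1"
  and field_aut_inj: "field_aut \<theta> \<Longrightarrow> inj \<theta>"
  unfolding field_aut_def bij_def by blast+

lemma field_aut_zero: "field_aut \<theta> \<Longrightarrow> \<theta> 0 = 0"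
  using field_aut_add[of \<theta> 0 0] by (metis add.right_neutral add_left_cancel)

lemma field_aut_minus: "field_aut \<theta> \<Longrightarrow> \<theta> (- x) = - \<theta> x"
  using field_aut_add[of \<theta> x "- x"] field_aut_zero[of \<theta>] by (metis neg_eq_iff_add_eq_0 add.right_inverse)

lemma field_aut_diff: "field_aut \<theta> \<Longrightarrow> \<theta> (x - y) = \<theta> x - \<theta> y"
  using field_aut_add[of \<theta> x "- y"] field_aut_minus[of \<theta> y] by simp

lemma field_aut_eq_0_iff: "field_aut \<theta> \<Longrightarrow> \<theta> x = 0 \<longleftrightarrow> x = 0"
  using field_aut_inj[of \<theta>] field_aut_zero[of \<theta>] by (metis injD)

lemma field_aut_sum: "field_aut \<theta> \<Longrightarrow> \<theta> (sum f A) = (\<Sum>x\<in>A. \<theta> (f x))"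
  by (induction A rule: infinite_finite_induct) (auto simp: field_aut_zero field_aut_add)

lemma field_aut_inverse: "field_aut \<theta> \<Longrightarrow> \<theta> (inverse x) = inverse (\<theta> x)"
proof (cases "x = 0")
  case False
  assume aut: "field_aut \<theta>"
  have "\<theta> x * \<theta> (inverse x) = \<theta> (x * inverse x)"
    by (simp add: field_aut_mult [OF aut])
  also have "\<dots> = 1"
    using False by (simp add: field_aut_one [OF aut])
  finally have "\<theta> x * \<theta> (inverse x) = 1" .
  then show ?thesis
    by (rule inverse_unique [symmetric])
qed (simp add: field_aut_zero)

lemma field_aut_funpow: "field_aut \<theta> \<Longrightarrow> field_aut (\<theta> ^^ i)"
proof (induction i)
  case 0
  then show ?case by (simp add: field_aut_def bij_betw_def inj_on_def)
next
  case (Suc i)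
  then show ?case
    by (auto simp: field_aut_def intro: bij_comp [of "\<theta> ^^ i" \<theta>, unfolded comp_def])
qed

lemma funpow_funpow_apply: "(f ^^ i) ((f ^^ j) x) = (f ^^ (i + j)) x"
  by (simp add: funpow_add)

lemma poly_mod_sum_left: "sum F A mod (p :: 'a::field poly) = (\<Sum>x\<in>A. F x mod p)"
  by (induction A rule: infinite_finite_induct) (auto simp: poly_mod_add_left)

lemma coeff_sum_monom_lessThan: "coeff (\<Sum>i<n. monom (c i) i) k = (if k < n then c k else 0)"
  by (auto simp: coeff_sum coeff_monom)

lemma sum_monom_coeff_lessThan: "degree p < n \<Longrightarrow> (\<Sum>i<n. monom (coeff p i) i) = p"
  by (rule poly_eqI) (auto simp: coeff_sum_monom_lessThan coeff_eq_0)

lemma degree_sum_monom_lessThan: "0 < n \<Longrightarrow> degree (\<Sum>i<n. monom (c i) i) < n"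
  by (rule order.strict_trans1 [of _ "n - 1"], rule degree_sum_le)
    (auto intro: order.trans [OF degree_monom_le])

lemma sum_products_expand:
  fixes a :: "'i \<Rightarrow> 'c::comm_ring_1"
  shows "(\<Sum>t<n. (\<Sum>i\<in>I. a i * A i t) * (\<Sum>j\<in>J. b j * B j t)) =
    (\<Sum>i\<in>I. \<Sum>j\<in>J. a i * b j * (\<Sum>t<n. A i t * B j t))"
proof -
  have "(\<Sum>t<n. (\<Sum>i\<in>I. a i * A i t) * (\<Sum>j\<in>J. b j * B j t)) =
      (\<Sum>t<n. \<Sum>i\<in>I. \<Sum>j\<in>J. a i * b j * (A i t * B j t))"
    unfolding sum_product by (simp add: mult_ac)
  also have "\<dots> = (\<Sum>i\<in>I. \<Sum>j\<in>J. \<Sum>t<n. a i * b j * (A i t * B j t))"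
    by (subst sum.swap) (simp only: sum.swap [of _ "{..<n}"])
  finally show ?thesis
    by (simp add: sum_distrib_left)
qed

section \<open>Skew polynomial multiplication\<close>

locale skew_poly =
  fixes \<theta> :: "'a::field \<Rightarrow> 'a"
  assumes aut: "field_aut \<theta>"
begin

abbreviation skew_times :: "'a poly \<Rightarrow> 'a poly \<Rightarrow> 'a poly" (infixl "\<star>" 70)
  where "f \<star> g \<equiv> skew_mult \<theta> f g"

lemmas funpow_aut_zero [simp] = field_aut_zero [OF field_aut_funpow [OF aut]]
  and funpow_aut_one [simp] = field_aut_one [OF field_aut_funpow [OF aut]]
  and funpow_aut_add [simp] = field_aut_add [OF field_aut_funpow [OF aut]]
  and funpow_aut_mult [simp] = field_aut_mult [OF field_aut_funpow [OF aut]]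
  and funpow_aut_minus [simp] = field_aut_minus [OF field_aut_funpow [OF aut]]
  and funpow_aut_diff [simp] = field_aut_diff [OF field_aut_funpow [OF aut]]
  and funpow_aut_eq_0_iff [simp] = field_aut_eq_0_iff [OF field_aut_funpow [OF aut]]
  and funpow_aut_sum = field_aut_sum [OF field_aut_funpow [OF aut]]

lemma coeff_map_poly_funpow [simp]: "coeff (map_poly (\<theta> ^^ i) p) k = (\<theta> ^^ i) (coeff p k)"
  by (simp add: coeff_map_poly)

lemma map_poly_funpow_add: "map_poly (\<theta> ^^ i) (p + q) = map_poly (\<theta> ^^ i) p + map_poly (\<theta> ^^ i) q"
  and map_poly_funpow_diff: "map_poly (\<theta> ^^ i) (p - q) = map_poly (\<theta> ^^ i) p - map_poly (\<theta> ^^ i) q"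
  and map_poly_funpow_monom: "map_poly (\<theta> ^^ i) (monom c k) = monom ((\<theta> ^^ i) c) k"
  and map_poly_funpow_const: "map_poly (\<theta> ^^ i) [:c:] = [:(\<theta> ^^ i) c:]"
  by (rule poly_eqI; simp add: coeff_monom coeff_pCons split: nat.split)+

lemma map_poly_funpow_sum: "map_poly (\<theta> ^^ i) (sum F A) = (\<Sum>x\<in>A. map_poly (\<theta> ^^ i) (F x))"
  by (rule poly_eqI) (simp add: coeff_sum funpow_aut_sum)

lemma skew_mult_eq_sum_atMost:
  assumes "degree f \<le> N"
  shows "f \<star> g = (\<Sum>i\<le>N. monom (coeff f i) i * map_poly (\<theta> ^^ i) g)"
  unfolding skew_mult_def
  by (rule sum.mono_neutral_left) (use assms in \<open>auto simp: coeff_eq_0\<close>)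

lemma skew_mult_add_left: "(f + g) \<star> h = f \<star> h + g \<star> h"
proof -
  let ?N = "max (degree f) (degree g)"
  have "degree (f + g) \<le> ?N" by (rule degree_add_le) auto
  then show ?thesis
    by (simp add: skew_mult_eq_sum_atMost [of _ ?N] sum.distrib distrib_right add_monom [symmetric])
qed

lemma skew_mult_add_right: "f \<star> (g + h) = f \<star> g + f \<star> h"
  unfolding skew_mult_def by (simp add: map_poly_funpow_add distrib_left sum.distrib)

lemma skew_mult_0_left [simp]: "0 \<star> f = 0"
  and skew_mult_0_right [simp]: "f \<star> 0 = 0"
  unfolding skew_mult_def by simp_all

lemma skew_mult_diff_left: "(f - g) \<star> h = f \<star> h - g \<star> h"
  using skew_mult_add_left [of "f - g" g h] by (simp add: eq_diff_eq)

lemma skew_mult_diff_right: "f \<star> (g - h) = f \<star> g - f \<star> h"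
  using skew_mult_add_right [of f "g - h" h] by (simp add: eq_diff_eq)

lemma skew_mult_minus_left: "(- f) \<star> h = - (f \<star> h)"
  using skew_mult_diff_left [of 0 f h] by simp

lemma skew_mult_sum_left: "sum F A \<star> h = (\<Sum>x\<in>A. F x \<star> h)"
  by (induction A rule: infinite_finite_induct) (auto simp: skew_mult_add_left)

lemma skew_mult_sum_right: "h \<star> sum F A = (\<Sum>x\<in>A. h \<star> F x)"
  by (induction A rule: infinite_finite_induct) (auto simp: skew_mult_add_right)

lemma skew_mult_monom_left: "monom b i \<star> g = monom b i * map_poly (\<theta> ^^ i) g"
proof -
  have "monom b i \<star> g = (\<Sum>j\<le>i. monom (coeff (monom b i) j) j * map_poly (\<theta> ^^ j) g)"
    by (rule skew_mult_eq_sum_atMost) (simp add: degree_monom_le)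
  also have "\<dots> = monom b i * map_poly (\<theta> ^^ i) g"
    by (subst sum.remove [of _ i]) (auto simp: coeff_monom intro!: sum.neutral)
  finally show ?thesis .
qed

lemma skew_mult_monom_monom: "monom b i \<star> monom c j = monom (b * (\<theta> ^^ i) c) (i + j)"
  by (simp add: skew_mult_monom_left map_poly_funpow_monom mult_monom)

lemma skew_mult_const_left: "[:c:] \<star> g = Polynomial.smult c g"
  using skew_mult_monom_left [of c 0 g] by (simp add: monom_0)

lemma skew_mult_1_left [simp]: "1 \<star> f = f"
  using skew_mult_const_left [of 1 f] by (simp add: one_pCons)

lemma skew_mult_1_right [simp]: "f \<star> 1 = f"
  unfolding skew_mult_def
  by (simp add: map_poly_funpow_const poly_as_sum_of_monoms flip: one_pCons)

lemma skew_mult_as_sum_monoms: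
  "f \<star> g = (\<Sum>i\<le>degree f. \<Sum>j\<le>degree g. monom (coeff f i) i \<star> monom (coeff g j) j)"
proof -
  have "f \<star> g = (\<Sum>i\<le>degree f. monom (coeff f i) i) \<star> (\<Sum>j\<le>degree g. monom (coeff g j) j)"
    by (simp only: poly_as_sum_of_monoms)
  then show ?thesis
    by (simp only: skew_mult_sum_left) (simp only: skew_mult_sum_right)
qed

text \<open>Associativity holds on monomials because \<open>\<theta>\<^sup>i\<close> is multiplicative and
  \<open>\<theta>\<^sup>i \<circ> \<theta>\<^sup>j = \<theta>\<^sup>i\<^sup>+\<^sup>j\<close>; it extends by biadditivity.\<close>
lemma skew_mult_assoc: "(f \<star> g) \<star> h = f \<star> (g \<star> h)"
proof -
  let ?F = "\<lambda>i. monom (coeff f i) i" and ?G = "\<lambda>j. monom (coeff g j) j"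
    and ?H = "\<lambda>l. monom (coeff h l) l"
  have "(f \<star> g) \<star> h = (\<Sum>i\<le>degree f. \<Sum>j\<le>degree g. ?F i \<star> ?G j) \<star> (\<Sum>l\<le>degree h. ?H l)"
    by (simp only: skew_mult_as_sum_monoms [of f g] poly_as_sum_of_monoms)
  also have "\<dots> = (\<Sum>i\<le>degree f. \<Sum>j\<le>degree g. \<Sum>l\<le>degree h. (?F i \<star> ?G j) \<star> ?H l)"
    by (simp only: skew_mult_sum_left) (simp only: skew_mult_sum_right)
  also have "\<dots> = (\<Sum>i\<le>degree f. \<Sum>j\<le>degree g. \<Sum>l\<le>degree h. ?F i \<star> (?G j \<star> ?H l))"
    by (simp add: skew_mult_monom_monom funpow_add mult.assoc add_ac)
  also have "\<dots> = (\<Sum>i\<le>degree f. ?F i) \<star> (\<Sum>j\<le>degree g. \<Sum>l\<le>degree h. ?G j \<star> ?H l)"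
    by (simp only: skew_mult_sum_left) (simp only: skew_mult_sum_right)
  also have "\<dots> = f \<star> (g \<star> h)"
    by (simp only: skew_mult_as_sum_monoms [of g h] poly_as_sum_of_monoms)
  finally show ?thesis .
qed

lemma skew_mult_smult_left: "Polynomial.smult c f \<star> g = Polynomial.smult c (f \<star> g)"
  by (metis skew_mult_const_left skew_mult_assoc)

lemma skew_mult_monom_eq_smult: "monom c l \<star> g = Polynomial.smult c (monom 1 l \<star> g)"
  using skew_mult_smult_left [of c "monom 1 l" g] by (simp add: smult_monom)

lemma skew_mult_eq_sum_lessThan:
  assumes "degree r < N"
  shows "r \<star> g = (\<Sum>l<N. Polynomial.smult (coeff r l) (monom 1 l \<star> g))"
proof -
  have "r \<star> g = (\<Sum>l<N. monom (coeff r l) l) \<star> g"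
    by (subst sum_monom_coeff_lessThan [OF assms]) (rule refl)
  also have "\<dots> = (\<Sum>l<N. Polynomial.smult (coeff r l) (monom 1 l \<star> g))"
    unfolding skew_mult_sum_left by (intro sum.cong refl skew_mult_monom_eq_smult)
  finally show ?thesis .
qed

lemma coeff_skew_mult: "coeff (f \<star> g) k = (\<Sum>i\<le>k. coeff f i * (\<theta> ^^ i) (coeff g (k - i)))"
proof -
  have "coeff (f \<star> g) k = (\<Sum>i\<le>max k (degree f). if i \<le> k then coeff f i * (\<theta> ^^ i) (coeff g (k - i)) else 0)"
    by (auto simp: skew_mult_eq_sum_atMost [of f "max k (degree f)"] coeff_sum coeff_monom_mult
        coeff_map_poly intro!: sum.cong)
  also have "\<dots> = (\<Sum>i\<le>k. coeff f i * (\<theta> ^^ i) (coeff g (k - i)))"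
    by (rule sum.mono_neutral_cong_right) auto
  finally show ?thesis .
qed

lemma coeff_monom_skew_mult:
  "coeff (monom 1 i \<star> g) t = (if i \<le> t then (\<theta> ^^ i) (coeff g (t - i)) else 0)"
  by (simp add: skew_mult_monom_left coeff_monom_mult not_le)

lemma degree_skew_mult_le: "degree (f \<star> g) \<le> degree f + degree g"
  unfolding skew_mult_def
  by (rule degree_sum_le)
    (auto intro!: order.trans [OF degree_mult_le] add_mono order.trans [OF degree_monom_le]
      simp: degree_map_poly)

lemma coeff_skew_mult_degree:
  "coeff (f \<star> g) (degree f + degree g) = lead_coeff f * (\<theta> ^^ degree f) (lead_coeff g)"
proof -
  have "coeff f i * (\<theta> ^^ i) (coeff g (degree f + degree g - i)) = 0" if "i \<noteq> degree f" for i
    using that by (cases "i < degree f") (auto simp: coeff_eq_0)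
  then have "coeff (f \<star> g) (degree f + degree g) =
      (\<Sum>i\<le>degree f + degree g. if i = degree f then lead_coeff f * (\<theta> ^^ i) (lead_coeff g) else 0)"
    unfolding coeff_skew_mult by (intro sum.cong) auto
  then show ?thesis by simp
qed

lemma degree_skew_mult:
  assumes "f \<noteq> 0" "g \<noteq> 0"
  shows "degree (f \<star> g) = degree f + degree g"
  using assms coeff_skew_mult_degree [of f g] degree_skew_mult_le [of f g]
  by (simp add: le_antisym le_degree)

lemma skew_mult_eq_0_iff [simp]: "f \<star> g = 0 \<longleftrightarrow> f = 0 \<or> g = 0"
  using coeff_skew_mult_degree [of f g] by auto

lemma skew_mult_cancel_left: "f \<noteq> 0 \<Longrightarrow> f \<star> g = f \<star> h \<longleftrightarrow> g = h"
  using skew_mult_diff_right [of f g h] by auto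

lemma skew_mult_cancel_right: "f \<noteq> 0 \<Longrightarrow> g \<star> f = h \<star> f \<longleftrightarrow> g = h"
  using skew_mult_diff_left [of g h f] by auto

lemma coeff_skew_mult_shifts: "coeff (r \<star> g) t = (\<Sum>i\<le>degree r. coeff r i * coeff (monom 1 i \<star> g) t)"
  unfolding skew_mult_def [of \<theta> r]
  by (auto simp: coeff_sum coeff_monom_mult coeff_monom_skew_mult intro!: sum.cong)

end

section \<open>The quotient \<open>S\<^sub>e = R / R(x\<^sup>n - e)\<close>\<close>

locale skew_quotient = skew_poly \<theta> for \<theta> :: "'a::field \<Rightarrow> 'a" +
  fixes n :: nat and e :: 'a
  assumes n_pos: "0 < n" and funpow_n: "\<theta> ^^ n = id" and fixed: "\<theta> e = e"
begin

abbreviation modulus :: "'a poly" where "modulus \<equiv> xn_minus n e"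
abbreviation cls :: "'a poly \<Rightarrow> 'a poly set" where "cls \<equiv> scls \<theta> n e"

lemma funpow_fixed: "(\<theta> ^^ i) e = e"
  using fixed by (induction i) auto

lemma coeff_modulus: "coeff modulus k = (if k = n then 1 else if k = 0 then - e else 0)"
  using n_pos by (auto simp: xn_minus_def coeff_monom coeff_pCons split: nat.split)

lemma degree_modulus: "degree modulus = n"
  by (rule le_antisym; rule degree_le le_degree) (auto simp: coeff_modulus)

lemma modulus_nonzero: "modulus \<noteq> 0"
  using degree_modulus n_pos by auto

lemma skew_mult_modulus_right: "f \<star> modulus = f * modulus"
proof -
  have "map_poly (\<theta> ^^ i) modulus = modulus" for i
    using funpow_fixed [of i] unfolding xn_minus_def
    by (simp add: map_poly_funpow_diff map_poly_funpow_monom map_poly_funpow_const)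
  then show ?thesis
    unfolding skew_mult_def by (simp add: poly_as_sum_of_monoms flip: sum_distrib_right)
qed

lemma skew_mult_modulus_left: "modulus \<star> f = modulus * f"
  using funpow_n unfolding xn_minus_def
  by (simp add: skew_mult_diff_left skew_mult_monom_left skew_mult_const_left left_diff_distrib)

lemma modulus_skew_central: "modulus \<star> f = f \<star> modulus"
  by (simp add: skew_mult_modulus_left skew_mult_modulus_right mult.commute)

lemma skew_cong_iff_mod: "skew_cong \<theta> n e f g \<longleftrightarrow> f mod modulus = g mod modulus"
  unfolding skew_cong_def skew_mult_modulus_right mod_eq_dvd_iff dvd_def
  by (auto simp: mult.commute)

lemma scls_eq_iff: "cls f = cls g \<longleftrightarrow> f mod modulus = g mod modulus"
  unfolding scls_def skew_cong_iff_mod by (auto simp: set_eq_iff)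

lemma scls_eq_0_iff: "cls f = cls 0 \<longleftrightarrow> (\<exists>q. f = q \<star> modulus)"
  by (auto simp: scls_eq_iff skew_mult_modulus_right mult.commute elim!: dvdE)

lemma degree_mod_modulus: "degree (f mod modulus) < n"
  using degree_mod_less [OF modulus_nonzero, of f] degree_modulus n_pos by auto

lemma mod_modulus_eq_self: "degree f < n \<Longrightarrow> f mod modulus = f"
  by (simp add: mod_poly_less degree_modulus)

lemma mod_skew_mult_mod_left: "((f mod modulus) \<star> g) mod modulus = (f \<star> g) mod modulus"
proof -
  have "f = f mod modulus + modulus \<star> (f div modulus)"
    by (simp add: skew_mult_modulus_left mod_mult_div_eq)
  then have "f \<star> g = (f mod modulus) \<star> g + modulus \<star> ((f div modulus) \<star> g)"
    by (metis skew_mult_add_left skew_mult_assoc)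
  then show ?thesis
    by (simp add: skew_mult_modulus_left)
qed

lemma mod_skew_mult_mod_right: "(f \<star> (g mod modulus)) mod modulus = (f \<star> g) mod modulus"
proof -
  have "g = g mod modulus + (g div modulus) \<star> modulus"
    by (simp add: skew_mult_modulus_right mod_div_mult_eq)
  then have "f \<star> g = f \<star> (g mod modulus) + (f \<star> (g div modulus)) \<star> modulus"
    by (metis skew_mult_add_right skew_mult_assoc)
  then show ?thesis
    by (simp add: skew_mult_modulus_right)
qed

lemma mod_skew_mult_cong:
  "f mod modulus = f' mod modulus \<Longrightarrow> g mod modulus = g' mod modulus \<Longrightarrow>
    (f \<star> g) mod modulus = (f' \<star> g') mod modulus"
  by (metis mod_skew_mult_mod_left mod_skew_mult_mod_right)

lemma srep_mod: "srep (cls f) mod modulus = f mod modulus"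
proof -
  have "f \<in> cls f"
    by (simp add: scls_def skew_cong_iff_mod)
  then have "srep (cls f) \<in> cls f"
    unfolding srep_def by (rule someI)
  then show ?thesis
    by (simp add: scls_def skew_cong_iff_mod)
qed

lemma SS_cases: "X \<in> SS \<theta> n e \<Longrightarrow> (\<And>f. X = cls f \<Longrightarrow> P) \<Longrightarrow> P"
  unfolding SS_def by auto

lemma scls_in_SS [simp]: "cls f \<in> SS \<theta> n e"
  unfolding SS_def by auto

lemma sadd_scls [simp]: "sadd \<theta> n e (cls f) (cls g) = cls (f + g)"
  unfolding sadd_def scls_eq_iff poly_mod_add_left by (simp add: srep_mod)

lemma smul_scls [simp]: "smul \<theta> n e (cls f) (cls g) = cls (f \<star> g)"
  unfolding smul_def scls_eq_iff by (intro mod_skew_mult_cong srep_mod)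

lemma sact_scls [simp]: "sact \<theta> n e r (cls f) = cls (r \<star> f)"
  unfolding sact_def scls_eq_iff by (intro mod_skew_mult_cong srep_mod refl)

lemma sact_r_scls [simp]: "sact_r \<theta> n e (cls f) r = cls (f \<star> r)"
  unfolding sact_r_def scls_eq_iff by (intro mod_skew_mult_cong srep_mod refl)

lemma scls_eq_0_skew_mult:
  assumes "cls f = cls 0"
  shows "cls (f \<star> t) = cls 0" and "cls (t \<star> f) = cls 0"
  using assms mod_skew_mult_mod_left [of f t] mod_skew_mult_mod_right [of t f]
  by (simp_all add: scls_eq_iff)

lemma sv_scls: "sv \<theta> n e (cls f) = vec n (coeff (f mod modulus))"
  unfolding sv_def
proof (rule the_equality)
  show "vec n (coeff (f mod modulus)) \<in> carrier_vec n \<and>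
      cls (\<Sum>i<n. monom (vec n (coeff (f mod modulus)) $ i) i) = cls f"
    by (simp add: sum_monom_coeff_lessThan degree_mod_modulus scls_eq_iff)
next
  fix c :: "'a vec"
  assume c: "c \<in> carrier_vec n \<and> cls (\<Sum>i<n. monom (c $ i) i) = cls f"
  then have sum_eq: "(\<Sum>i<n. monom (c $ i) i) = f mod modulus"
    by (simp add: scls_eq_iff mod_modulus_eq_self degree_sum_monom_lessThan n_pos)
  have "coeff (f mod modulus) i = c $ i" if "i < n" for i
    using that by (simp add: coeff_sum_monom_lessThan flip: sum_eq)
  then show "c = vec n (coeff (f mod modulus))"
    using c by (intro eq_vecI) auto
qed

lemma Mmat_scls: "Mmat \<theta> n e (cls f) = mat n n (\<lambda>(i, j). coeff ((monom 1 i \<star> f) mod modulus) j)"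
  unfolding Mmat_def sact_scls sv_scls by (intro eq_matI) auto

lemma Mmat_scls_add: "Mmat \<theta> n e (cls (f + g)) = Mmat \<theta> n e (cls f) + Mmat \<theta> n e (cls g)"
  unfolding Mmat_scls by (intro eq_matI) (auto simp: skew_mult_add_right poly_mod_add_left)

lemma Mmat_scls_0: "Mmat \<theta> n e (cls 0) = 0\<^sub>m n n"
  unfolding Mmat_scls by (intro eq_matI) auto

lemma Mmat_scls_1: "Mmat \<theta> n e (cls 1) = 1\<^sub>m n"
  unfolding Mmat_scls
  by (intro eq_matI) (auto simp: mod_modulus_eq_self degree_monom_eq coeff_monom)

text \<open>Row \<open>i\<close> of the matrix of \<open>f g\<close> is row \<open>i\<close> of the matrix of \<open>f\<close> times the
  matrix of \<open>g\<close>: reduce \<open>x\<^sup>i f\<close> first and expand it in the monomials \<open>x\<^sup>l\<close>, \<open>l < n\<close>.\<close>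
lemma mod_skew_mult_row:
  "(monom 1 i \<star> (f \<star> g)) mod modulus =
    (\<Sum>l<n. Polynomial.smult (coeff ((monom 1 i \<star> f) mod modulus) l) ((monom 1 l \<star> g) mod modulus))"
proof -
  let ?r = "(monom 1 i \<star> f) mod modulus"
  have "(monom 1 i \<star> (f \<star> g)) mod modulus = (?r \<star> g) mod modulus"
    by (simp add: mod_skew_mult_mod_left skew_mult_assoc)
  also have "?r \<star> g = (\<Sum>l<n. Polynomial.smult (coeff ?r l) (monom 1 l \<star> g))"
    using degree_mod_modulus by (rule skew_mult_eq_sum_lessThan)
  finally show ?thesis
    by (simp add: poly_mod_sum_left mod_smult_left)
qed

lemma Mmat_scls_mult: "Mmat \<theta> n e (cls (f \<star> g)) = Mmat \<theta> n e (cls f) * Mmat \<theta> n e (cls g)"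
  by (rule eq_matI)
    (auto simp: Mmat_scls scalar_prod_def mod_skew_mult_row coeff_sum atLeast0LessThan)

lemma Mmat_sadd:
  "X \<in> SS \<theta> n e \<Longrightarrow> Y \<in> SS \<theta> n e \<Longrightarrow>
    Mmat \<theta> n e (sadd \<theta> n e X Y) = Mmat \<theta> n e X + Mmat \<theta> n e Y"
  by (elim SS_cases) (simp add: Mmat_scls_add)

lemma Mmat_smul:
  "X \<in> SS \<theta> n e \<Longrightarrow> Y \<in> SS \<theta> n e \<Longrightarrow>
    Mmat \<theta> n e (smul \<theta> n e X Y) = Mmat \<theta> n e X * Mmat \<theta> n e Y"
  by (elim SS_cases) (simp add: Mmat_scls_mult)

text \<open>Row \<open>0\<close> of the matrix is the coefficient vector of the reduced representative.\<close>
lemma Mmat_scls_inj: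
  assumes eq: "Mmat \<theta> n e (cls f) = Mmat \<theta> n e (cls g)"
  shows "cls f = cls g"
proof -
  have "coeff (f mod modulus) j = coeff (g mod modulus) j" for j
  proof (cases "j < n")
    case True
    then have "Mmat \<theta> n e (cls f) $$ (0, j) = Mmat \<theta> n e (cls g) $$ (0, j)"
      using eq by simp
    then show ?thesis
      using True n_pos by (simp add: Mmat_scls)
  next
    case False
    then show ?thesis
      using degree_mod_modulus [of f] degree_mod_modulus [of g] by (simp add: coeff_eq_0)
  qed
  then show "cls f = cls g"
    by (simp add: scls_eq_iff poly_eqI)
qed

lemma inj_on_Mmat: "inj_on (Mmat \<theta> n e) (SS \<theta> n e)"
  by (rule inj_onI) (metis SS_cases Mmat_scls_inj)

lemma xn_minus_factor_swap:
  assumes "modulus = h \<star> g"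
  shows "modulus = g \<star> h"
proof -
  have "h \<noteq> 0"
    using assms modulus_nonzero by auto
  moreover have "h \<star> (g \<star> h) = modulus \<star> h"
    by (simp add: assms skew_mult_assoc)
  then have "h \<star> (g \<star> h) = h \<star> modulus"
    by (simp only: modulus_skew_central)
  ultimately show ?thesis
    by (simp add: skew_mult_cancel_left)
qed

lemma Mmat_factors_mult_eq_0:
  assumes "modulus = h \<star> g"
  shows "Mmat \<theta> n e (cls h) * Mmat \<theta> n e (cls g) = 0\<^sub>m n n"
proof -
  have "cls modulus = cls 0"
    by (simp add: scls_eq_iff)
  then show ?thesis
    by (simp add: assms Mmat_scls_0 flip: Mmat_scls_mult)
qed

section \<open>Kernels and annihilators of the multiplication maps\<close>

lemma sact_r_sadd:
  "X \<in> SS \<theta> n e \<Longrightarrow> Y \<in> SS \<theta> n e \<Longrightarrow>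
    sact_r \<theta> n e (sadd \<theta> n e X Y) w = sadd \<theta> n e (sact_r \<theta> n e X w) (sact_r \<theta> n e Y w)"
  by (elim SS_cases) (simp add: skew_mult_add_left)

lemma sact_r_sact:
  "X \<in> SS \<theta> n e \<Longrightarrow> sact_r \<theta> n e (sact \<theta> n e r X) w = sact \<theta> n e r (sact_r \<theta> n e X w)"
  by (elim SS_cases) (simp add: skew_mult_assoc)

lemma sact_sadd:
  "X \<in> SS \<theta> n e \<Longrightarrow> Y \<in> SS \<theta> n e \<Longrightarrow>
    sact \<theta> n e w (sadd \<theta> n e X Y) = sadd \<theta> n e (sact \<theta> n e w X) (sact \<theta> n e w Y)"
  by (elim SS_cases) (simp add: skew_mult_add_right)

lemma smul_scls_right_ideal: "{smul \<theta> n e (cls w) T | T. T \<in> SS \<theta> n e} = {cls (w \<star> t) | t. True}"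
  unfolding SS_def by auto (metis rangeI smul_scls)

lemma smul_scls_left_ideal: "{smul \<theta> n e T (cls w) | T. T \<in> SS \<theta> n e} = {cls (t \<star> w) | t. True}"
  unfolding SS_def by auto (metis rangeI smul_scls)

lemma ann_l_right_ideal:
  "ann_l \<theta> n e {smul \<theta> n e (cls w) T | T. T \<in> SS \<theta> n e} = {X \<in> SS \<theta> n e. sact_r \<theta> n e X w = cls 0}"
  unfolding ann_l_def smul_scls_right_ideal
proof (rule Collect_cong, rule conj_cong [OF refl])
  fix X assume "X \<in> SS \<theta> n e"
  then obtain p where X: "X = cls p"
    by (rule SS_cases)
  show "(\<forall>x\<in>{cls (w \<star> t) | t. True}. smul \<theta> n e X x = cls 0) \<longleftrightarrow> sact_r \<theta> n e X w = cls 0"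
  proof
    assume "\<forall>x\<in>{cls (w \<star> t) | t. True}. smul \<theta> n e X x = cls 0"
    then have "smul \<theta> n e X (cls (w \<star> 1)) = cls 0"
      by blast
    then show "sact_r \<theta> n e X w = cls 0"
      by (simp add: X)
  next
    assume "sact_r \<theta> n e X w = cls 0"
    then have "cls (p \<star> w) = cls 0"
      by (simp add: X)
    then have zero: "cls ((p \<star> w) \<star> t) = cls 0" for t
      by (rule scls_eq_0_skew_mult(1))
    show "\<forall>x\<in>{cls (w \<star> t) | t. True}. smul \<theta> n e X x = cls 0"
    proof
      fix x assume "x \<in> {cls (w \<star> t) | t. True}"
      then obtain t where "x = cls (w \<star> t)"
        by blast
      then show "smul \<theta> n e X x = cls 0"
        using zero [of t] by (simp add: X skew_mult_assoc)
    qed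
  qed
qed

lemma ann_r_left_ideal:
  "ann_r \<theta> n e {smul \<theta> n e T (cls w) | T. T \<in> SS \<theta> n e} = {X \<in> SS \<theta> n e. sact \<theta> n e w X = cls 0}"
  unfolding ann_r_def smul_scls_left_ideal
proof (rule Collect_cong, rule conj_cong [OF refl])
  fix X assume "X \<in> SS \<theta> n e"
  then obtain p where X: "X = cls p"
    by (rule SS_cases)
  show "(\<forall>x\<in>{cls (t \<star> w) | t. True}. smul \<theta> n e x X = cls 0) \<longleftrightarrow> sact \<theta> n e w X = cls 0"
  proof
    assume "\<forall>x\<in>{cls (t \<star> w) | t. True}. smul \<theta> n e x X = cls 0"
    then have "smul \<theta> n e (cls (1 \<star> w)) X = cls 0"
      by blast
    then show "sact \<theta> n e w X = cls 0"
      by (simp add: X)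
  next
    assume "sact \<theta> n e w X = cls 0"
    then have "cls (w \<star> p) = cls 0"
      by (simp add: X)
    then have zero: "cls (t \<star> (w \<star> p)) = cls 0" for t
      by (rule scls_eq_0_skew_mult(2))
    show "\<forall>x\<in>{cls (t \<star> w) | t. True}. smul \<theta> n e x X = cls 0"
    proof
      fix x assume "x \<in> {cls (t \<star> w) | t. True}"
      then obtain t where "x = cls (t \<star> w)"
        by blast
      then show "smul \<theta> n e x X = cls 0"
        using zero [of t] by (simp add: X skew_mult_assoc)
    qed
  qed
qed

lemma scls_skew_mult_right_eq_0_iff:
  assumes "modulus = u \<star> w"
  shows "cls (p \<star> w) = cls 0 \<longleftrightarrow> (\<exists>q. p = q \<star> u)"
proof -
  have "w \<noteq> 0"
    using assms modulus_nonzero by auto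
  then have "p \<star> w = q \<star> modulus \<longleftrightarrow> p = q \<star> u" for q
    by (simp add: assms skew_mult_cancel_right flip: skew_mult_assoc)
  then show ?thesis
    by (simp add: scls_eq_0_iff)
qed

lemma scls_skew_mult_left_eq_0_iff:
  assumes "modulus = w \<star> u"
  shows "cls (w \<star> p) = cls 0 \<longleftrightarrow> (\<exists>q. p = u \<star> q)"
proof -
  have "w \<noteq> 0"
    using assms modulus_nonzero by auto
  moreover have "q \<star> modulus = w \<star> (u \<star> q)" for q
    using modulus_skew_central [of q] by (simp add: assms skew_mult_assoc)
  ultimately have "w \<star> p = q \<star> modulus \<longleftrightarrow> p = u \<star> q" for q
    by (simp add: skew_mult_cancel_left)
  then show ?thesis
    by (simp add: scls_eq_0_iff)
qed

lemma kernel_sact_r: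
  assumes "modulus = u \<star> w"
  shows "{X \<in> SS \<theta> n e. sact_r \<theta> n e X w = cls 0} = {sact \<theta> n e r (cls u) | r. True}"
proof (intro equalityI subsetI)
  fix X assume "X \<in> {X \<in> SS \<theta> n e. sact_r \<theta> n e X w = cls 0}"
  then obtain p where X: "X = cls p" and "sact_r \<theta> n e X w = cls 0"
    unfolding SS_def by blast
  then obtain q where "p = q \<star> u"
    using scls_skew_mult_right_eq_0_iff [OF assms] by auto
  then have "X = sact \<theta> n e q (cls u)"
    by (simp add: X)
  then show "X \<in> {sact \<theta> n e r (cls u) | r. True}"
    by blast
next
  fix X assume "X \<in> {sact \<theta> n e r (cls u) | r. True}"
  then obtain r where "X = sact \<theta> n e r (cls u)"
    by blast
  moreover have "cls ((r \<star> u) \<star> w) = cls 0"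
    using scls_skew_mult_right_eq_0_iff [OF assms] by blast
  ultimately show "X \<in> {X \<in> SS \<theta> n e. sact_r \<theta> n e X w = cls 0}"
    by simp
qed

lemma kernel_sact:
  assumes "modulus = w \<star> u"
  shows "{X \<in> SS \<theta> n e. sact \<theta> n e w X = cls 0} = {smul \<theta> n e (cls u) T | T. T \<in> SS \<theta> n e}"
  unfolding smul_scls_right_ideal
proof (intro equalityI subsetI)
  fix X assume "X \<in> {X \<in> SS \<theta> n e. sact \<theta> n e w X = cls 0}"
  then obtain p where X: "X = cls p" and "sact \<theta> n e w X = cls 0"
    unfolding SS_def by blast
  then obtain q where "p = u \<star> q"
    using scls_skew_mult_left_eq_0_iff [OF assms] by auto
  then show "X \<in> {cls (u \<star> t) | t. True}"
    using X by blast
next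
  fix X assume "X \<in> {cls (u \<star> t) | t. True}"
  then obtain q where "X = cls (u \<star> q)"
    by blast
  moreover have "cls (w \<star> (u \<star> q)) = cls 0"
    using scls_skew_mult_left_eq_0_iff [OF assms] by blast
  ultimately show "X \<in> {X \<in> SS \<theta> n e. sact \<theta> n e w X = cls 0}"
    by simp
qed

end

section \<open>Skew reversal\<close>

definition skew_reverse :: "('a::field \<Rightarrow> 'a) \<Rightarrow> nat \<Rightarrow> 'a poly \<Rightarrow> 'a poly" where
  "skew_reverse \<theta> N f = (\<Sum>m\<le>N. monom ((\<theta> ^^ m) (coeff f (N - m))) m)"

lemma rho_l_eq_skew_reverse: "rho_l \<theta> h = skew_reverse \<theta> (degree h) h"
  unfolding rho_l_def skew_reverse_def ..

lemma coeff_skew_reverse: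
  "coeff (skew_reverse \<theta> N f) m = (if m \<le> N then (\<theta> ^^ m) (coeff f (N - m)) else 0)"
  unfolding skew_reverse_def by (simp add: coeff_sum coeff_monom)

lemma coeff_rho_l:
  "coeff (rho_l \<theta> h) m = (if m \<le> degree h then (\<theta> ^^ m) (coeff h (degree h - m)) else 0)"
  by (simp add: rho_l_eq_skew_reverse coeff_skew_reverse)

context skew_poly
begin

lemma skew_reverse_sum: "skew_reverse \<theta> N (sum F A) = (\<Sum>x\<in>A. skew_reverse \<theta> N (F x))"
  by (rule poly_eqI) (auto simp: coeff_skew_reverse coeff_sum funpow_aut_sum)

lemma skew_reverse_monom:
  "p \<le> N \<Longrightarrow> skew_reverse \<theta> N (monom b p) = monom ((\<theta> ^^ (N - p)) b) (N - p)"
  by (rule poly_eqI) (auto simp: coeff_skew_reverse coeff_monom)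

lemma skew_reverse_monom_mult:
  assumes "p \<le> N" "r \<le> M"
  shows "skew_reverse \<theta> (N + M) (monom b p \<star> monom c r) =
    skew_reverse \<theta> M (map_poly (\<theta> ^^ N) (monom c r)) \<star> skew_reverse \<theta> N (monom b p)"
proof -
  have "N + M - (p + r) = (M - r) + (N - p)" and "(M - r) + (N - p) + p = (M - r) + N"
    using assms by simp_all
  then show ?thesis
    using assms
    by (simp add: skew_mult_monom_monom skew_reverse_monom map_poly_funpow_monom funpow_funpow_apply
        mult.commute)
qed

lemma skew_reverse_skew_mult:
  assumes f: "degree f \<le> N" and g: "degree g \<le> M"
  shows "skew_reverse \<theta> (N + M) (f \<star> g) =
    skew_reverse \<theta> M (map_poly (\<theta> ^^ N) g) \<star> skew_reverse \<theta> N f"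
proof -
  let ?F = "\<lambda>p. monom (coeff f p) p" and ?G = "\<lambda>r. monom (coeff g r) r"
  have "f \<star> g = (\<Sum>p\<le>N. ?F p) \<star> (\<Sum>r\<le>M. ?G r)"
    using f g by (simp only: poly_as_sum_of_monoms')
  also have "\<dots> = (\<Sum>p\<le>N. \<Sum>r\<le>M. ?F p \<star> ?G r)"
    by (simp only: skew_mult_sum_left) (simp only: skew_mult_sum_right)
  finally have fg: "f \<star> g = (\<Sum>p\<le>N. \<Sum>r\<le>M. ?F p \<star> ?G r)" .
  have "map_poly (\<theta> ^^ N) g = map_poly (\<theta> ^^ N) (\<Sum>r\<le>M. ?G r)"
    using g by (simp only: poly_as_sum_of_monoms')
  then have rev_g: "skew_reverse \<theta> M (map_poly (\<theta> ^^ N) g) =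
      (\<Sum>r\<le>M. skew_reverse \<theta> M (map_poly (\<theta> ^^ N) (?G r)))"
    by (simp only: map_poly_funpow_sum skew_reverse_sum)
  have "skew_reverse \<theta> N f = skew_reverse \<theta> N (\<Sum>p\<le>N. ?F p)"
    using f by (simp only: poly_as_sum_of_monoms')
  then have rev_f: "skew_reverse \<theta> N f = (\<Sum>p\<le>N. skew_reverse \<theta> N (?F p))"
    by (simp only: skew_reverse_sum)
  have "skew_reverse \<theta> (N + M) (f \<star> g) = (\<Sum>p\<le>N. \<Sum>r\<le>M. skew_reverse \<theta> (N + M) (?F p \<star> ?G r))"
    by (simp only: fg skew_reverse_sum)
  also have "\<dots> = (\<Sum>p\<le>N. \<Sum>r\<le>M.
      skew_reverse \<theta> M (map_poly (\<theta> ^^ N) (?G r)) \<star> skew_reverse \<theta> N (?F p))"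
    by (intro sum.cong refl skew_reverse_monom_mult) auto
  also have "\<dots> = (\<Sum>r\<le>M. skew_reverse \<theta> M (map_poly (\<theta> ^^ N) (?G r)) \<star> (\<Sum>p\<le>N. skew_reverse \<theta> N (?F p)))"
    by (subst sum.swap) (simp only: skew_mult_sum_right)
  also have "\<dots> = skew_reverse \<theta> M (map_poly (\<theta> ^^ N) g) \<star> skew_reverse \<theta> N f"
    by (simp only: rev_g rev_f skew_mult_sum_left)
  finally show ?thesis .
qed

lemma degree_rho_l: "coeff h 0 \<noteq> 0 \<Longrightarrow> degree (rho_l \<theta> h) = degree h"
  by (rule le_antisym; rule degree_le le_degree) (auto simp: coeff_rho_l)

lemma rho_l_nonzero: "h \<noteq> 0 \<Longrightarrow> rho_l \<theta> h \<noteq> 0"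
  using coeff_rho_l [of \<theta> h 0] by auto

lemma coeff_monom_skew_mult_rho_l:
  "coeff (monom 1 j \<star> rho_l \<theta> h) t =
    (if t \<le> degree h + j then (\<theta> ^^ t) (coeff h (degree h + j - t)) else 0)"
proof (cases "j \<le> t")
  case True
  then show ?thesis
    by (auto simp: coeff_monom_skew_mult coeff_rho_l funpow_funpow_apply)
next
  case False
  then show ?thesis
    by (auto simp: coeff_monom_skew_mult coeff_eq_0)
qed

text \<open>The inner product of \<open>x\<^sup>i g\<close> and \<open>x\<^sup>j \<rho>(h)\<close> is a twisted coefficient of \<open>g h\<close>.\<close>
lemma shifts_orthogonal_rho_l:
  assumes i: "i < degree h" and j: "j + degree h < n"
    and vanish: "\<And>s. 0 < s \<Longrightarrow> s < n \<Longrightarrow> coeff (g \<star> h) s = 0"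
  shows "(\<Sum>t<n. coeff (monom 1 i \<star> g) t * coeff (monom 1 j \<star> rho_l \<theta> h) t) = 0"
proof -
  define k where "k = degree h"
  define s where "s = k + j - i"
  let ?F = "\<lambda>t. (\<theta> ^^ i) (coeff g (t - i)) * (\<theta> ^^ t) (coeff h (k + j - t))"
  have "coeff (monom 1 i \<star> g) t * coeff (monom 1 j \<star> rho_l \<theta> h) t =
      (if t \<in> {i..k + j} then ?F t else 0)" for t
    unfolding coeff_monom_skew_mult_rho_l by (simp add: coeff_monom_skew_mult k_def)
  then have "(\<Sum>t<n. coeff (monom 1 i \<star> g) t * coeff (monom 1 j \<star> rho_l \<theta> h) t) =
      (\<Sum>t<n. if t \<in> {i..k + j} then ?F t else 0)"
    by simp
  also have "\<dots> = sum ?F ({..<n} \<inter> {i..k + j})"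
    by (rule sum.inter_restrict [symmetric]) simp
  also have "{..<n} \<inter> {i..k + j} = {0 + i..s + i}"
    using i j by (auto simp: k_def s_def)
  also have "sum ?F {0 + i..s + i} = (\<Sum>l\<le>s. ?F (l + i))"
    by (simp only: sum.shift_bounds_cl_nat_ivl atLeast0AtMost)
  also have "\<dots> = (\<Sum>l\<le>s. (\<theta> ^^ i) (coeff g l * (\<theta> ^^ l) (coeff h (s - l))))"
    using i by (intro sum.cong refl) (auto simp: s_def k_def funpow_funpow_apply add.commute)
  also have "\<dots> = (\<theta> ^^ i) (coeff (g \<star> h) s)"
    by (simp add: coeff_skew_mult funpow_aut_sum)
  also have "\<dots> = 0"
    using i j by (simp add: vanish s_def k_def)
  finally show ?thesis .
qed

end

context skew_quotient
begin

lemma skew_reverse_modulus: "skew_reverse \<theta> n modulus = 1 - monom e n"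
  using n_pos funpow_n
  by (intro poly_eqI) (auto simp: coeff_skew_reverse coeff_modulus coeff_monom funpow_fixed)

end

section \<open>The dual code\<close>

text \<open>For a right divisor \<open>w\<close> of \<open>x\<^sup>n - e\<close> this is the code \<open>v\<^sub>e(R w)\<close>; in
  particular it does not depend on \<open>e\<close>.\<close>
definition skew_code :: "('a::field \<Rightarrow> 'a) \<Rightarrow> nat \<Rightarrow> 'a poly \<Rightarrow> 'a vec set" where
  "skew_code \<theta> n w = {vec n (coeff (skew_mult \<theta> r w)) | r. degree (skew_mult \<theta> r w) < n}"

context skew_poly
begin

text \<open>The shifts \<open>x\<^sup>i g\<close> are in echelon form, since \<open>x\<^sup>i g\<close> starts at \<open>x\<^sup>i\<close> with the
  unit \<open>\<theta>\<^sup>i(g\<^sub>0)\<close>; so a vector orthogonal to all of them that vanishes from position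
  \<open>k\<close> on vanishes at its last nonzero position as well.\<close>
lemma orthogonal_to_shifts_eq_0:
  assumes d: "d \<in> carrier_vec n" and g0: "coeff g 0 \<noteq> 0"
    and tail: "\<And>s. s + k < n \<Longrightarrow> d $ (s + k) = 0"
    and orth: "\<And>i. i < k \<Longrightarrow> vec n (coeff (monom 1 i \<star> g)) \<bullet> d = 0"
  shows "d = 0\<^sub>v n"
proof (rule ccontr)
  let ?S = "{t. t < n \<and> d $ t \<noteq> 0}"
  assume "d \<noteq> 0\<^sub>v n"
  then have "?S \<noteq> {}"
    using d by (auto simp: vec_eq_iff)
  have fin: "finite ?S"
    by simp
  define t where "t = Max ?S"
  have "t \<in> ?S"
    unfolding t_def using fin \<open>?S \<noteq> {}\<close> by (rule Max_in)
  then have t: "t < n" "d $ t \<noteq> 0"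
    by simp_all
  have zero_above: "d $ s = 0" if "t < s" "s < n" for s
  proof (rule ccontr)
    assume "d $ s \<noteq> 0"
    with \<open>s < n\<close> have "s \<le> t"
      unfolding t_def using fin by (intro Max_ge) simp_all
    with \<open>t < s\<close> show False
      by simp
  qed
  have "t < k"
  proof (rule ccontr)
    assume "\<not> t < k"
    then have "t = (t - k) + k"
      by simp
    then show False
      using tail [of "t - k"] t by metis
  qed
  have "vec n (coeff (monom 1 t \<star> g)) \<bullet> d = (\<Sum>s<n. coeff (monom 1 t \<star> g) s * d $ s)"
    using d by (simp add: scalar_prod_def atLeast0LessThan)
  also have "\<dots> = (\<Sum>s\<in>{t}. coeff (monom 1 t \<star> g) s * d $ s)"
    by (rule sum.mono_neutral_right) (auto simp: coeff_monom_skew_mult zero_above t)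
  also have "\<dots> = (\<theta> ^^ t) (coeff g 0) * d $ t"
    by (simp add: coeff_monom_skew_mult)
  finally show False
    using orth [OF \<open>t < k\<close>] g0 t by simp
qed

end

context skew_quotient
begin

lemma sv_left_ideal:
  assumes factor: "modulus = u \<star> w"
  shows "sv \<theta> n e ` {sact \<theta> n e r (cls w) | r. True} = skew_code \<theta> n w"
proof (intro equalityI subsetI)
  fix c assume "c \<in> sv \<theta> n e ` {sact \<theta> n e r (cls w) | r. True}"
  then obtain r where c: "c = vec n (coeff ((r \<star> w) mod modulus))"
    by (auto simp: sv_scls)
  let ?q = "(r \<star> w) div modulus"
  have "?q * modulus = ?q \<star> modulus"
    by (rule skew_mult_modulus_right [symmetric])
  also have "\<dots> = (?q \<star> u) \<star> w"
    by (simp add: factor skew_mult_assoc)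
  finally have "(r \<star> w) mod modulus = (r - ?q \<star> u) \<star> w"
    using mod_div_mult_eq [of "r \<star> w" modulus] by (simp add: skew_mult_diff_left eq_diff_eq)
  then have "c = vec n (coeff ((r - ?q \<star> u) \<star> w)) \<and> degree ((r - ?q \<star> u) \<star> w) < n"
    using c degree_mod_modulus [of "r \<star> w"] by simp
  then show "c \<in> skew_code \<theta> n w"
    unfolding skew_code_def by blast
next
  fix c assume "c \<in> skew_code \<theta> n w"
  then obtain r where "c = vec n (coeff (r \<star> w))" and "degree (r \<star> w) < n"
    unfolding skew_code_def by blast
  then have "c = sv \<theta> n e (sact \<theta> n e r (cls w))"
    by (simp add: sv_scls mod_modulus_eq_self)
  then show "c \<in> sv \<theta> n e ` {sact \<theta> n e r (cls w) | r. True}"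
    by blast
qed

end

locale skew_factorization = skew_quotient \<theta> n a for \<theta> :: "'a::field \<Rightarrow> 'a" and n a +
  fixes g h :: "'a poly"
  assumes a_nonzero: "a \<noteq> 0" and factorization: "modulus = h \<star> g"
begin

lemma factors_nonzero: "h \<noteq> 0" "g \<noteq> 0"
  using factorization modulus_nonzero by auto

lemma degree_factors: "degree h + degree g = n"
  using degree_skew_mult [OF factors_nonzero] by (simp add: degree_modulus flip: factorization)

lemma coeff_0_factors: "coeff h 0 \<noteq> 0" "coeff g 0 \<noteq> 0"
proof -
  have "coeff h 0 * coeff g 0 = - a"
    using coeff_skew_mult [of h g 0] n_pos by (simp add: coeff_modulus flip: factorization)
  then show "coeff h 0 \<noteq> 0" "coeff g 0 \<noteq> 0"
    using a_nonzero by auto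
qed

lemma factorization_swap: "modulus = g \<star> h"
  using factorization by (rule xn_minus_factor_swap)

lemma degree_rho: "degree (rho_l \<theta> h) = degree h"
  using coeff_0_factors(1) by (rule degree_rho_l)

text \<open>Reversing \<open>x\<^sup>n - a = h g\<close> gives \<open>1 - a x\<^sup>n = \<rho>(g') \<rho>(h)\<close> for a twist \<open>g'\<close> of
  \<open>g\<close>, so \<open>\<rho>(h)\<close> right-divides \<open>x\<^sup>n - a\<^sup>-\<^sup>1\<close>.\<close>
lemma xn_minus_inverse_factor:
  "xn_minus n (inverse a) =
    Polynomial.smult (- inverse a) (skew_reverse \<theta> (n - degree h) (map_poly (\<theta> ^^ degree h) g)) \<star> rho_l \<theta> h"
proof -
  have "skew_reverse \<theta> (degree h + (n - degree h)) (h \<star> g) =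
      skew_reverse \<theta> (n - degree h) (map_poly (\<theta> ^^ degree h) g) \<star> skew_reverse \<theta> (degree h) h"
    using degree_factors by (intro skew_reverse_skew_mult) auto
  then have "1 - monom a n = skew_reverse \<theta> (n - degree h) (map_poly (\<theta> ^^ degree h) g) \<star> rho_l \<theta> h"
    using degree_factors by (simp add: skew_reverse_modulus rho_l_eq_skew_reverse flip: factorization)
  moreover have "xn_minus n (inverse a) = Polynomial.smult (- inverse a) (1 - monom a n)"
    using n_pos a_nonzero
    by (intro poly_eqI) (auto simp: xn_minus_def coeff_monom coeff_pCons split: nat.split)
  ultimately show ?thesis
    by (simp add: skew_mult_smult_left skew_mult_minus_left)
qed

lemma inverse_quotient: "skew_quotient \<theta> n (inverse a)"
  by unfold_locales (simp_all add: aut n_pos funpow_n fixed field_aut_inverse [OF aut])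

lemma skew_code_rho_orthogonal: "skew_code \<theta> n (rho_l \<theta> h) \<subseteq> dual_code n (skew_code \<theta> n g)"
proof (intro subsetI)
  fix y assume "y \<in> skew_code \<theta> n (rho_l \<theta> h)"
  then obtain s where y: "y = vec n (coeff (s \<star> rho_l \<theta> h))" and ds: "degree (s \<star> rho_l \<theta> h) < n"
    unfolding skew_code_def by blast
  have vanish: "coeff (g \<star> h) t = 0" if "0 < t" "t < n" for t
    using that by (simp add: coeff_modulus flip: factorization_swap)
  have "c \<bullet> y = 0" if "c \<in> skew_code \<theta> n g" for c
  proof -
    obtain r where c: "c = vec n (coeff (r \<star> g))" and dr: "degree (r \<star> g) < n"
      using \<open>c \<in> skew_code \<theta> n g\<close> unfolding skew_code_def by blast
    have "coeff r i * coeff s j *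
        (\<Sum>t<n. coeff (monom 1 i \<star> g) t * coeff (monom 1 j \<star> rho_l \<theta> h) t) = 0"
      if "i \<le> degree r" "j \<le> degree s" for i j
    proof (cases "r = 0 \<or> s = 0")
      case False
      then have "i < degree h" and "j + degree h < n"
        using that dr ds degree_skew_mult [of r g] degree_skew_mult [of s "rho_l \<theta> h"]
          factors_nonzero degree_factors degree_rho rho_l_nonzero
        by auto
      then show ?thesis
        using vanish by (simp add: shifts_orthogonal_rho_l)
    qed auto
    then have "(\<Sum>i\<le>degree r. \<Sum>j\<le>degree s. coeff r i * coeff s j *
        (\<Sum>t<n. coeff (monom 1 i \<star> g) t * coeff (monom 1 j \<star> rho_l \<theta> h) t)) = 0"
      by (intro sum.neutral ballI) simp
    then show "c \<bullet> y = 0"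
      unfolding c y scalar_prod_def
      by (simp add: atLeast0LessThan coeff_skew_mult_shifts [of r] coeff_skew_mult_shifts [of s]
          sum_products_expand)
  qed
  then show "y \<in> dual_code n (skew_code \<theta> n g)"
    using y unfolding dual_code_def by simp
qed

lemma shift_in_skew_code: "i < degree h \<Longrightarrow> vec n (coeff (monom 1 i \<star> g)) \<in> skew_code \<theta> n g"
  using degree_skew_mult [of "monom 1 i" g] factors_nonzero degree_factors
  unfolding skew_code_def by (auto simp: degree_monom_eq)

lemma inj_on_dual_code_tail:
  "inj_on (\<lambda>y. vec (n - degree h) (\<lambda>t. y $ (t + degree h))) (dual_code n (skew_code \<theta> n g))"
proof (rule inj_onI)
  fix y1 y2
  assume y1: "y1 \<in> dual_code n (skew_code \<theta> n g)" and y2: "y2 \<in> dual_code n (skew_code \<theta> n g)"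
    and eq: "vec (n - degree h) (\<lambda>t. y1 $ (t + degree h)) = vec (n - degree h) (\<lambda>t. y2 $ (t + degree h))"
  have c: "y1 \<in> carrier_vec n" "y2 \<in> carrier_vec n"
    using y1 y2 by (auto simp: dual_code_def)
  have "y1 - y2 = 0\<^sub>v n"
  proof (rule orthogonal_to_shifts_eq_0)
    show "y1 - y2 \<in> carrier_vec n" "coeff g 0 \<noteq> 0"
      using c coeff_0_factors by simp_all
  next
    fix s assume "s + degree h < n"
    then have "vec (n - degree h) (\<lambda>t. y1 $ (t + degree h)) $ s =
        vec (n - degree h) (\<lambda>t. y2 $ (t + degree h)) $ s"
      using eq by simp
    then show "(y1 - y2) $ (s + degree h) = 0"
      using \<open>s + degree h < n\<close> c by simp
  next
    fix i assume "i < degree h"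
    then have "vec n (coeff (monom 1 i \<star> g)) \<in> skew_code \<theta> n g"
      by (rule shift_in_skew_code)
    then show "vec n (coeff (monom 1 i \<star> g)) \<bullet> (y1 - y2) = 0"
      using y1 y2 c by (simp add: dual_code_def scalar_prod_minus_distrib)
  qed
  then show "y1 = y2"
    using c by (metis index_minus_vec(1) index_zero_vec(1) carrier_vecD eq_iff_diff_eq_0 eq_vecI)
qed

lemma degree_sum_monom_skew_mult_rho:
  "degree ((\<Sum>j<n - degree h. monom (c j) j) \<star> rho_l \<theta> h) < n"
proof (cases "(\<Sum>j<n - degree h. monom (c j) j) = 0")
  case False
  have "0 < n - degree h"
  proof (rule ccontr)
    assume "\<not> 0 < n - degree h"
    then have "n - degree h = 0"
      by simp
    then show False
      using False by simp
  qed
  then have "degree (\<Sum>j<n - degree h. monom (c j) j) < n - degree h"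
    by (rule degree_sum_monom_lessThan)
  then show ?thesis
    using False degree_skew_mult [OF False rho_l_nonzero [OF factors_nonzero(1)]] degree_rho by simp
qed (simp add: n_pos)

lemma skew_code_rho_parametrization:
  defines "enc \<equiv> \<lambda>w. vec n (coeff ((\<Sum>j<n - degree h. monom (w $ j) j) \<star> rho_l \<theta> h))"
  shows "inj_on enc (carrier_vec (n - degree h))" and "enc ` carrier_vec (n - degree h) \<subseteq> skew_code \<theta> n (rho_l \<theta> h)"
proof -
  show "enc ` carrier_vec (n - degree h) \<subseteq> skew_code \<theta> n (rho_l \<theta> h)"
    unfolding enc_def skew_code_def using degree_sum_monom_skew_mult_rho by blast
  show "inj_on enc (carrier_vec (n - degree h))"
  proof (rule inj_onI)
    fix w1 w2 :: "'a vec"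
    assume w: "w1 \<in> carrier_vec (n - degree h)" "w2 \<in> carrier_vec (n - degree h)" and "enc w1 = enc w2"
    then have "coeff ((\<Sum>j<n - degree h. monom (w1 $ j) j) \<star> rho_l \<theta> h) t =
        coeff ((\<Sum>j<n - degree h. monom (w2 $ j) j) \<star> rho_l \<theta> h) t" for t
      using degree_sum_monom_skew_mult_rho [of "\<lambda>j. w1 $ j"] degree_sum_monom_skew_mult_rho [of "\<lambda>j. w2 $ j"]
      unfolding enc_def by (cases "t < n") (auto simp: vec_eq_iff coeff_eq_0)
    then have "(\<Sum>j<n - degree h. monom (w1 $ j) j) \<star> rho_l \<theta> h =
        (\<Sum>j<n - degree h. monom (w2 $ j) j) \<star> rho_l \<theta> h"
      by (rule poly_eqI)
    then have "(\<Sum>j<n - degree h. monom (w1 $ j) j) = (\<Sum>j<n - degree h. monom (w2 $ j) j)"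
      using rho_l_nonzero [OF factors_nonzero(1)] by (simp add: skew_mult_cancel_right)
    then have coeff_eq: "coeff (\<Sum>j<n - degree h. monom (w1 $ j) j) j =
        coeff (\<Sum>j<n - degree h. monom (w2 $ j) j) j" for j
      by simp
    show "w1 = w2"
    proof (rule eq_vecI)
      fix j assume "j < dim_vec w2"
      then have "j < n - degree h"
        using w by simp
      with coeff_eq [of j] show "w1 $ j = w2 $ j"
        by (simp add: coeff_sum_monom_lessThan)
    qed (use w in simp)
  qed
qed

end

lemma finite_carrier_vec: "finite (carrier_vec m :: 'a::finite vec set)"
proof -
  have "carrier_vec m \<subseteq> vec_of_list ` {xs :: 'a list. set xs \<subseteq> UNIV \<and> length xs = m}"
    by (auto simp: vec_list intro!: image_eqI [of _ _ "list_of_vec _"])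
  moreover have "finite {xs :: 'a list. set xs \<subseteq> UNIV \<and> length xs = m}"
    by (rule finite_lists_length_eq) simp
  ultimately show ?thesis
    by (meson finite_imageI finite_subset)
qed

lemma dual_skew_code:
  fixes \<theta> :: "'a::{finite,field} \<Rightarrow> 'a"
  assumes "skew_factorization \<theta> n a g h"
  shows "dual_code n (skew_code \<theta> n g) = skew_code \<theta> n (rho_l \<theta> h)"
proof -
  interpret skew_factorization \<theta> n a g h
    by (fact assms)
  let ?C = "dual_code n (skew_code \<theta> n g)" and ?D = "skew_code \<theta> n (rho_l \<theta> h)"
  have fin: "finite ?C"
    by (rule finite_subset [OF _ finite_carrier_vec]) (auto simp: dual_code_def)
  have "card ?C \<le> card (carrier_vec (n - degree h) :: 'a vec set)"
    by (rule card_inj_on_le [OF inj_on_dual_code_tail _ finite_carrier_vec]) auto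
  also have "\<dots> \<le> card ?D"
    by (rule card_inj_on_le [OF skew_code_rho_parametrization finite_subset])
      (rule skew_code_rho_orthogonal fin)+
  finally show ?thesis
    using card_seteq [OF fin skew_code_rho_orthogonal] by simp
qed

theorem theorem6p6:
  fixes \<theta> :: "'a::{finite,field} \<Rightarrow> 'a" and n :: nat and a :: 'a and g h :: "'a poly"
  assumes aut: "field_aut \<theta>"
    and npos: "0 < n"
    and nid: "\<theta> ^^ n = id"
    and a0: "a \<noteq> 0"
    and afix: "\<theta> a = a"
    and fact: "xn_minus n a = skew_mult \<theta> h g"
  shows "
    ((\<forall>X\<in>SS \<theta> n a. \<forall>Y\<in>SS \<theta> n a.
        Mmat \<theta> n a (sadd \<theta> n a X Y) = Mmat \<theta> n a X + Mmat \<theta> n a Y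
      \<and> Mmat \<theta> n a (smul \<theta> n a X Y) = Mmat \<theta> n a X * Mmat \<theta> n a Y)
     \<and> Mmat \<theta> n a (scls \<theta> n a 1) = 1\<^sub>m n
     \<and> inj_on (Mmat \<theta> n a) (SS \<theta> n a)) \<and>
    (xn_minus n a = skew_mult \<theta> g h) \<and>
    (Mmat \<theta> n a (scls \<theta> n a g) * Mmat \<theta> n a (scls \<theta> n a h) = 0\<^sub>m n n
     \<and> Mmat \<theta> n a (scls \<theta> n a h) * Mmat \<theta> n a (scls \<theta> n a g) = 0\<^sub>m n n) \<and>
    ((\<forall>f. sact_r \<theta> n a (scls \<theta> n a f) h = scls \<theta> n a (skew_mult \<theta> f h))
     \<and> (\<forall>X\<in>SS \<theta> n a. \<forall>Y\<in>SS \<theta> n a. \<forall>r.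
          sact_r \<theta> n a (sadd \<theta> n a X Y) h = sadd \<theta> n a (sact_r \<theta> n a X h) (sact_r \<theta> n a Y h)
        \<and> sact_r \<theta> n a (sact \<theta> n a r X) h = sact \<theta> n a r (sact_r \<theta> n a X h))
     \<and> {X \<in> SS \<theta> n a. sact_r \<theta> n a X h = scls \<theta> n a 0} = {sact \<theta> n a r (scls \<theta> n a g) | r. True}
     \<and> {sact \<theta> n a r (scls \<theta> n a g) | r. True}
         = ann_l \<theta> n a {smul \<theta> n a (scls \<theta> n a h) T | T. T \<in> SS \<theta> n a}) \<and>
    ((\<forall>f. sact_r \<theta> n a (scls \<theta> n a f) g = scls \<theta> n a (skew_mult \<theta> f g))
     \<and> (\<forall>X\<in>SS \<theta> n a. \<forall>Y\<in>SS \<theta> n a. \<forall>r.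
          sact_r \<theta> n a (sadd \<theta> n a X Y) g = sadd \<theta> n a (sact_r \<theta> n a X g) (sact_r \<theta> n a Y g)
        \<and> sact_r \<theta> n a (sact \<theta> n a r X) g = sact \<theta> n a r (sact_r \<theta> n a X g))
     \<and> {X \<in> SS \<theta> n a. sact_r \<theta> n a X g = scls \<theta> n a 0} = {sact \<theta> n a r (scls \<theta> n a h) | r. True}
     \<and> {sact \<theta> n a r (scls \<theta> n a h) | r. True}
         = ann_l \<theta> n a {smul \<theta> n a (scls \<theta> n a g) T | T. T \<in> SS \<theta> n a}) \<and>
    ((\<forall>f. sact \<theta> n a h (scls \<theta> n a f) = scls \<theta> n a (skew_mult \<theta> h f))
     \<and> (\<forall>X\<in>SS \<theta> n a. \<forall>Y\<in>SS \<theta> n a. \<forall>r.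
          sact \<theta> n a h (sadd \<theta> n a X Y) = sadd \<theta> n a (sact \<theta> n a h X) (sact \<theta> n a h Y)
        \<and> sact \<theta> n a h (sact_r \<theta> n a X r) = sact_r \<theta> n a (sact \<theta> n a h X) r)
     \<and> {X \<in> SS \<theta> n a. sact \<theta> n a h X = scls \<theta> n a 0}
         = {smul \<theta> n a (scls \<theta> n a g) T | T. T \<in> SS \<theta> n a}
     \<and> {smul \<theta> n a (scls \<theta> n a g) T | T. T \<in> SS \<theta> n a}
         = ann_r \<theta> n a {smul \<theta> n a T (scls \<theta> n a h) | T. T \<in> SS \<theta> n a}) \<and>
    ((\<forall>f. sact \<theta> n a g (scls \<theta> n a f) = scls \<theta> n a (skew_mult \<theta> g f))
     \<and> (\<forall>X\<in>SS \<theta> n a. \<forall>Y\<in>SS \<theta> n a. \<forall>r.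
          sact \<theta> n a g (sadd \<theta> n a X Y) = sadd \<theta> n a (sact \<theta> n a g X) (sact \<theta> n a g Y)
        \<and> sact \<theta> n a g (sact_r \<theta> n a X r) = sact_r \<theta> n a (sact \<theta> n a g X) r)
     \<and> {X \<in> SS \<theta> n a. sact \<theta> n a g X = scls \<theta> n a 0}
         = {smul \<theta> n a (scls \<theta> n a h) T | T. T \<in> SS \<theta> n a}
     \<and> {smul \<theta> n a (scls \<theta> n a h) T | T. T \<in> SS \<theta> n a}
         = ann_r \<theta> n a {smul \<theta> n a T (scls \<theta> n a g) | T. T \<in> SS \<theta> n a}) \<and>
    (dual_code n (sv \<theta> n a ` {sact \<theta> n a r (scls \<theta> n a g) | r. True})
       = sv \<theta> n (inverse a) ` {sact \<theta> n (inverse a) r (scls \<theta> n (inverse a) (rho_l \<theta> h)) | r. True})"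
proof -
  interpret skew_factorization \<theta> n a g h
    by unfold_locales (use aut npos nid afix a0 fact in simp_all)
  interpret inverse: skew_quotient \<theta> n "inverse a"
    by (rule inverse_quotient)
  have swap: "xn_minus n a = skew_mult \<theta> g h"
    by (rule factorization_swap)
  have dual: "dual_code n (sv \<theta> n a ` {sact \<theta> n a r (scls \<theta> n a g) | r. True}) =
      sv \<theta> n (inverse a) ` {sact \<theta> n (inverse a) r (scls \<theta> n (inverse a) (rho_l \<theta> h)) | r. True}"
    by (simp only: sv_left_ideal [OF fact] inverse.sv_left_ideal [OF xn_minus_inverse_factor]
        dual_skew_code [OF skew_factorization_axioms])
  show ?thesis
    by (intro conjI ballI allI)
      (simp_all add: swap dual [simplified] Mmat_sadd Mmat_smul Mmat_scls_1 inj_on_Mmat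
        sact_r_sadd sact_sadd sact_r_sact
        Mmat_factors_mult_eq_0 [OF swap] Mmat_factors_mult_eq_0 [OF fact]
        kernel_sact_r [OF swap] kernel_sact_r [OF fact] kernel_sact [OF swap] kernel_sact [OF fact]
        ann_l_right_ideal ann_r_left_ideal)
qed

end
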